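(* Let $n$ and $x$ be positive integers with $x\le n$, and let $\mathcal M=\{M_1,\dots,M_s\}$ be a collection of perfect matchings of the complete graph $K_{2n}$. If $$s<\frac{x!}{2^x}\cdot\frac{\binom{2n}{x}\binom{2n-x}{x}}{\binom{n}{x}^2},$$ then there exists a perfect matching $M$ of $K_{2n}$ such that $|M\cap M_i|\le x-1$ for every $i\in\{1,\dots,s\}$.
   Context: A perfect matching of $K_{2n}$ is a set of $n$ pairwise vertex-disjoint edges covering all $2n$ vertices. A perfect matching $M$ "agrees with $M_i$ in at most $x-1$ edges" means $|M\cap M_i|\le x-1$. *)

theory Defs
  imports Complex_Main
begin

definition K_edges :: "nat \<Rightarrow> nat set set" where
  "K_edges n = {e. e \<subseteq> {0..<2*n} \<and> card e = 2}"

definition perfect_matching :: "nat \<Rightarrow> nat set set \<Rightarrow> bool" where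
  "perfect_matching n M \<longleftrightarrow>
     M \<subseteq> K_edges n \<and>
     (\<forall>e\<in>M. \<forall>f\<in>M. e \<noteq> f \<longrightarrow> e \<inter> f = {}) \<and>
     \<Union>M = {0..<2*n}"

end

theory Submission imports Defs begin

(* Proof by counting (a union bound).
   Work with perfect matchings pm V of an arbitrary finite vertex set V with |V| = 2m.
   1. There are exactly (2m-1)!! = (2m)! / (2^m m!) of them (recursion: match a fixed
      vertex v with one of the 2m-1 others, then match the rest).
   2. Fix a perfect matching N. Every M agreeing with N in at least k edges contains some
      k-subset F of N; the matchings containing F are in bijection with perfect matchings
      of V minus the 2k covered vertices. Hence at most (m choose k) * (2m-2k-1)!! perfect
      matchings agree with N in k or more edges.
   3. The hypothesis on s says exactly s * (n choose x) * (2n-2x-1)!! < (2n-1)!!, so the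
      s "bad" sets cannot cover all perfect matchings of K_{2n}, and any matching outside
      them agrees with every M_i in at most x-1 edges. *)

definition pm :: "'a set \<Rightarrow> 'a set set set" where
  "pm V = {M. (\<forall>e\<in>M. e \<subseteq> V \<and> card e = 2) \<and> (\<forall>e\<in>M. \<forall>f\<in>M. e \<noteq> f \<longrightarrow> e \<inter> f = {}) \<and> \<Union>M = V}"

fun pm_count :: "nat \<Rightarrow> nat" where
  "pm_count 0 = 1"
| "pm_count (Suc m) = (2*m+1) * pm_count m"

lemma pm_count_pos: "0 < pm_count m"
  by (induction m) auto

lemma pm_count_mult: "real (pm_count m) * (2^m * fact m) = fact (2*m)"
proof (induction m)
  case (Suc m)
  have "real (pm_count (Suc m)) * (2^Suc m * fact (Suc m))
        = (2*real m+1) * (2*real m+2) * (real (pm_count m) * (2^m * fact m))"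
    by (simp add: algebra_simps)
  also have "\<dots> = (2*real m+1) * (2*real m+2) * fact (2*m)"
    by (simp only: Suc.IH)
  also have "\<dots> = fact (2 * Suc m)"
    by (simp add: algebra_simps)
  finally show ?case .
qed simp

lemma pm_count_fact: "real (pm_count m) = fact (2*m) / (2^m * fact m)"
  by (simp flip: pm_count_mult)

lemma perfect_matching_iff_pm: "perfect_matching n M \<longleftrightarrow> M \<in> pm {0..<2*n}"
  unfolding perfect_matching_def pm_def K_edges_def mem_Collect_eq subset_eq by simp

lemma pm_finite: "finite V \<Longrightarrow> finite (pm V)"
  by (rule finite_subset[of _ "Pow (Pow V)"]) (auto simp: pm_def)

lemma pm_elem_finite: "finite V \<Longrightarrow> M \<in> pm V \<Longrightarrow> finite M"
  by (rule finite_subset[of _ "Pow V"]) (auto simp: pm_def)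

lemma pm_empty: "pm {} = {{}}"
  by (auto simp: pm_def)

lemma pm_remove:
  assumes M: "M \<in> pm V" and F: "F \<subseteq> M"
  shows "M - F \<in> pm (V - \<Union>F)"
proof -
  have edges: "\<forall>e\<in>M. e \<subseteq> V \<and> card e = 2"
    and disjoint: "\<forall>e\<in>M. \<forall>f\<in>M. e \<noteq> f \<longrightarrow> e \<inter> f = {}"
    and covers: "\<Union>M = V"
    using M unfolding pm_def by auto
  have apart: "e \<inter> \<Union>F = {}" if e: "e \<in> M - F" for e
  proof -
    have "e \<inter> f = {}" if "f \<in> F" for f
      using disjoint e F that by (metis Diff_iff subsetD)
    then show ?thesis by blast
  qed
  have "\<forall>e\<in>M - F. e \<subseteq> V - \<Union>F \<and> card e = 2" using edges apart by blast
  moreover have "\<forall>e\<in>M - F. \<forall>f\<in>M - F. e \<noteq> f \<longrightarrow> e \<inter> f = {}" using disjoint by blast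
  moreover have "\<Union>(M - F) = V - \<Union>F" using covers apart F by blast
  ultimately show ?thesis unfolding pm_def by blast
qed

lemma card_Union_pm:
  assumes M: "M \<in> pm V" and F: "F \<subseteq> M"
  shows "card (\<Union>F) = 2 * card F"
proof -
  have two: "card e = 2" if "e \<in> F" for e
    using M F that unfolding pm_def by blast
  have disjoint: "\<forall>e\<in>M. \<forall>f\<in>M. e \<noteq> f \<longrightarrow> e \<inter> f = {}"
    using M unfolding pm_def by auto
  have "pairwise disjnt F"
    unfolding pairwise_def disjnt_def
  proof (intro ballI impI)
    fix e f assume "e \<in> F" "f \<in> F" "e \<noteq> f"
    then show "e \<inter> f = {}" using disjoint F by blast
  qed
  then have "card (\<Union>F) = sum card F"
  proof (rule card_Union_disjoint)
    fix e assume "e \<in> F"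
    then show "finite e" using two by (metis card.infinite zero_neq_numeral)
  qed
  also have "\<dots> = sum (\<lambda>_. 2) F"
    by (rule sum.cong) (simp_all add: two)
  finally show ?thesis by simp
qed

lemma card_pm_elem:
  assumes "M \<in> pm V"
  shows "card V = 2 * card M"
  using card_Union_pm[OF assms subset_refl] assms by (simp add: pm_def)

lemma pm_step:
  assumes v: "v \<in> V"
  shows "pm V = (\<Union>w\<in>V-{v}. insert {v,w} ` pm (V - {v,w}))"
proof
  show "pm V \<subseteq> (\<Union>w\<in>V-{v}. insert {v,w} ` pm (V - {v,w}))"
  proof
    fix M assume M: "M \<in> pm V"
    then obtain e where e: "e \<in> M" "v \<in> e" using v unfolding pm_def by blast
    then have "card e = 2" "e \<subseteq> V" using M unfolding pm_def by auto
    then obtain w where w: "e = {v,w}" "w \<noteq> v" using e(2)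
      by (metis card_2_iff insert_commute insert_iff singletonD)
    have "M - {e} \<in> pm (V - e)" using pm_remove[OF M, of "{e}"] e by simp
    moreover have "M = insert e (M - {e})" using e by blast
    moreover have "w \<in> V - {v}" using w \<open>e \<subseteq> V\<close> by auto
    ultimately show "M \<in> (\<Union>w\<in>V-{v}. insert {v,w} ` pm (V - {v,w}))"
      using w by blast
  qed
next
  show "(\<Union>w\<in>V-{v}. insert {v,w} ` pm (V - {v,w})) \<subseteq> pm V"
  proof
    fix M assume "M \<in> (\<Union>w\<in>V-{v}. insert {v,w} ` pm (V - {v,w}))"
    then obtain w N where w: "w \<in> V" "w \<noteq> v" and N: "N \<in> pm (V - {v,w})"
      and MN: "M = insert {v,w} N" by blast
    show "M \<in> pm V"
      unfolding MN using N w v unfolding pm_def by auto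
  qed
qed

lemma card_pm: "finite V \<Longrightarrow> card V = 2*m \<Longrightarrow> card (pm V) = pm_count m"
proof (induction m arbitrary: V)
  case 0
  then show ?case by (simp add: pm_empty)
next
  case (Suc m)
  then obtain v where v: "v \<in> V" by fastforce
  let ?P = "\<lambda>w. insert {v,w} ` pm (V - {v,w})"
  have disjoint: "?P i \<inter> ?P j = {}" if "i \<in> V - {v}" "j \<in> V - {v}" "i \<noteq> j" for i j
  proof (rule ccontr)
    assume "?P i \<inter> ?P j \<noteq> {}"
    then obtain N N' where N': "N' \<in> pm (V - {v,j})" and "insert {v,i} N = insert {v,j} N'"
      by blast
    then have "{v,i} \<in> N'" using that by (metis doubleton_eq_iff insertE insertI1)
    then show False using N' unfolding pm_def by auto
  qed
  have each: "card (?P w) = pm_count m" if w: "w \<in> V - {v}" for w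
  proof -
    have "inj_on (insert {v,w}) (pm (V - {v,w}))"
    proof (rule inj_onI)
      fix A B assume "A \<in> pm (V - {v,w})" "B \<in> pm (V - {v,w})"
        and eq: "insert {v,w} A = insert {v,w} B"
      then have "{v,w} \<notin> A" "{v,w} \<notin> B" unfolding pm_def by auto
      then show "A = B" using eq by (metis insert_ident)
    qed
    then have "card (?P w) = card (pm (V - {v,w}))" by (rule card_image)
    also have "\<dots> = pm_count m"
      by (rule Suc.IH) (use Suc.prems w v in \<open>auto simp: card_Diff_subset\<close>)
    finally show ?thesis .
  qed
  have "card (pm V) = (\<Sum>w\<in>V-{v}. card (?P w))"
    unfolding pm_step[OF v]
  proof (rule card_UN_disjoint)
    show "finite (V - {v})" using Suc.prems by simp
    show "\<forall>w\<in>V - {v}. finite (?P w)"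
      using Suc.prems(1) pm_finite[of "V - _"] by blast
  qed (use disjoint in blast)
  also have "\<dots> = (2*m+1) * pm_count m"
    using each Suc.prems v by simp
  finally show ?case by simp
qed

text \<open>Perfect matchings containing a fixed k-subset F of a perfect matching of a 2m-set:
  at most (2(m-k)-1)!!, since removing F injects them into pm (V - \<Union>F).\<close>
lemma card_pm_containing_le:
  assumes V: "finite V" "card V = 2*m" and N: "N \<in> pm V" and F: "F \<subseteq> N" "card F = k"
  shows "card {M \<in> pm V. F \<subseteq> M} \<le> pm_count (m - k)"
proof -
  have UV: "\<Union>F \<subseteq> V" using N F unfolding pm_def by auto
  have rest: "card (V - \<Union>F) = 2*(m - k)"
    using card_Union_pm[OF N F(1)] F(2) UV V
    by (simp add: card_Diff_subset finite_subset diff_mult_distrib2)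
  have "{M \<in> pm V. F \<subseteq> M} \<subseteq> (\<lambda>R. R \<union> F) ` pm (V - \<Union>F)"
  proof
    fix M assume "M \<in> {M \<in> pm V. F \<subseteq> M}"
    then have M: "M \<in> pm V" "F \<subseteq> M" by auto
    have "M = (M - F) \<union> F" using M by blast
    with pm_remove[OF M] show "M \<in> (\<lambda>R. R \<union> F) ` pm (V - \<Union>F)" by (metis image_eqI)
  qed
  then have "card {M \<in> pm V. F \<subseteq> M} \<le> card ((\<lambda>R. R \<union> F) ` pm (V - \<Union>F))"
    by (intro card_mono finite_imageI pm_finite) (use V in auto)
  also have "\<dots> \<le> card (pm (V - \<Union>F))" by (rule card_image_le) (use V pm_finite in auto)
  also have "\<dots> = pm_count (m - k)" using card_pm[OF _ rest] V by simp
  finally show ?thesis .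
qed

text \<open>At most (m choose k) (2(m-k)-1)!! perfect matchings of a 2m-set agree with a given
  perfect matching N in k or more edges: each contains one of the k-subsets of N.\<close>
lemma card_pm_agreeing_le:
  assumes V: "finite V" "card V = 2*m" and N: "N \<in> pm V"
  shows "card {M \<in> pm V. k \<le> card (M \<inter> N)} \<le> (m choose k) * pm_count (m - k)"
proof -
  let ?Fs = "{F. F \<subseteq> N \<and> card F = k}"
  have fN: "finite N" using pm_elem_finite[OF V(1) N] .
  have cN: "card N = m" using card_pm_elem[OF N] V by simp
  have "{M \<in> pm V. k \<le> card (M \<inter> N)} \<subseteq> (\<Union>F\<in>?Fs. {M \<in> pm V. F \<subseteq> M})"
  proof
    fix M assume "M \<in> {M \<in> pm V. k \<le> card (M \<inter> N)}"
    then have M: "M \<in> pm V" "k \<le> card (M \<inter> N)" by auto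
    then obtain F where "F \<subseteq> M \<inter> N" "card F = k" by (metis obtain_subset_with_card_n)
    then have "F \<in> ?Fs" "M \<in> {M \<in> pm V. F \<subseteq> M}" using M by auto
    then show "M \<in> (\<Union>F\<in>?Fs. {M \<in> pm V. F \<subseteq> M})" by blast
  qed
  moreover have "finite (\<Union>F\<in>?Fs. {M \<in> pm V. F \<subseteq> M})"
    by (rule finite_subset[OF _ pm_finite[OF V(1)]]) blast
  ultimately have "card {M \<in> pm V. k \<le> card (M \<inter> N)} \<le> card (\<Union>F\<in>?Fs. {M \<in> pm V. F \<subseteq> M})"
    by (rule card_mono[rotated])
  also have "\<dots> \<le> (\<Sum>F\<in>?Fs. card {M \<in> pm V. F \<subseteq> M})"
    by (rule card_UN_le) (use fN in simp)
  also have "\<dots> \<le> (\<Sum>F\<in>?Fs. pm_count (m - k))"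
  proof (rule sum_mono)
    fix F assume "F \<in> ?Fs"
    then show "card {M \<in> pm V. F \<subseteq> M} \<le> pm_count (m - k)"
      using card_pm_containing_le[OF V N] by blast
  qed
  also have "\<dots> = card ?Fs * pm_count (m - k)" by simp
  also have "card ?Fs = m choose k" using n_subsets[OF fN, of k] cN by simp
  finally show ?thesis .
qed

lemma union_bound_avoid:
  assumes U: "finite U" and I: "finite I" and sub: "\<forall>i\<in>I. B i \<subseteq> U"
    and small: "\<forall>i\<in>I. card (B i) \<le> b" and lt: "card I * b < card U"
  shows "\<exists>u\<in>U. \<forall>i\<in>I. u \<notin> B i"
proof -
  have "card (\<Union>i\<in>I. B i) \<le> (\<Sum>i\<in>I. card (B i))" by (rule card_UN_le[OF I])
  also have "\<dots> \<le> card I * b" using sum_mono[of I _ "\<lambda>_. b"] small by simp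
  finally have "card (\<Union>i\<in>I. B i) < card U" using lt by simp
  moreover have "finite (\<Union>i\<in>I. B i)" using sub U by (meson UN_least finite_subset)
  ultimately have "\<not> U \<subseteq> (\<Union>i\<in>I. B i)"
    using card_mono[of "\<Union>i\<in>I. B i" U] by linarith
  then show ?thesis by blast
qed

lemma bound_eq_ratio:
  assumes "x \<le> n"
  shows "fact x / 2 ^ x *
           (real ((2*n) choose x) * real ((2*n - x) choose x) / real (n choose x) ^ 2)
         = real (pm_count n) / (real (n choose x) * real (pm_count (n-x)))"
proof -
  have c1: "real ((2*n) choose x) = fact (2*n) / (fact x * fact (2*n-x))"
    using assms by (simp add: binomial_fact)
  have c2: "real ((2*n-x) choose x) = fact (2*n-x) / (fact x * fact (2*(n-x)))"
  proof -
    have "2*n - x - x = 2*(n-x)" using assms by simp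
    moreover have "x \<le> 2*n - x" using assms by simp
    ultimately show ?thesis using binomial_fact[of x "2*n-x"] by simp
  qed
  have c3: "real (n choose x) = fact n / (fact x * fact (n-x))"
    using assms by (simp add: binomial_fact)
  have p: "(2::real)^n = 2^x * 2^(n-x)" using assms by (simp add: power_add[symmetric])
  show ?thesis unfolding c1 c2 c3 pm_count_fact p
    by (simp add: field_simps power2_eq_square)
qed

theorem theorem2:
  fixes n x s :: nat and Ms :: "nat \<Rightarrow> nat set set"
  assumes "0 < x" and "x \<le> n"
    and "\<forall>i\<in>{1..s}. perfect_matching n (Ms i)"
    and "real s < fact x / 2 ^ x *
           (real ((2*n) choose x) * real ((2*n - x) choose x) / real (n choose x) ^ 2)"
  shows "\<exists>M. perfect_matching n M \<and> (\<forall>i\<in>{1..s}. card (M \<inter> Ms i) \<le> x - 1)"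
proof -
  define V where "V = {0..<2*n}"
  have V: "finite V" "card V = 2*n" unfolding V_def by auto
  define bad where "bad i = {M \<in> pm V. x \<le> card (M \<inter> Ms i)}" for i
  let ?b = "(n choose x) * pm_count (n-x)"
  have bad_small: "\<forall>i\<in>{1..s}. card (bad i) \<le> ?b"
    using card_pm_agreeing_le[OF V] assms(3) unfolding bad_def V_def perfect_matching_iff_pm
    by blast
  have "real s < real (pm_count n) / real ?b"
    using assms(4) bound_eq_ratio[OF assms(2)] by simp
  moreover have "0 < real ?b" using pm_count_pos assms(2) by simp
  ultimately have "real s * real ?b < real (pm_count n)"
    by (simp add: pos_less_divide_eq)
  then have "card {1..s} * ?b < card (pm V)"
    unfolding card_pm[OF V] by (simp flip: of_nat_mult)
  then obtain M where "M \<in> pm V" "\<forall>i\<in>{1..s}. M \<notin> bad i"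
    using union_bound_avoid[OF pm_finite[OF V(1)], of "{1..s}" bad ?b] bad_small
    unfolding bad_def by blast
  then show ?thesis
    unfolding perfect_matching_iff_pm bad_def V_def by (auto intro!: exI[of _ M])
qed

end
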